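(* Let $n\ge1$, $N=2^n$, and let $B_m$ ($0\le m\le n-1$) be the maps defined below. For a finitely supported $H:\{0,1\}^n\times\{0,1\}^n\times\mathbb{Z}\times\mathbb{Z}\to\mathbb{R}$, regarded as a function on $\{0,1\}^0\times\{0,1\}^n\times\{0,1\}^n\times\mathbb{Z}^2$, the function $P=B_0\circ B_1\circ\cdots\circ B_{n-1}(H)$, defined on $\{0,1\}^n\times\{0,1\}^0\times\{0,1\}^0\times\mathbb{Z}^2$, satisfies, for all $\mathbf v\in\{0,1\}^n$ and $e_1,e_2\in\mathbb{Z}$, $$P(\mathbf v\mid\emptyset\mid\emptyset\mid e_1\mid e_2)=\sum_{\mathbf s_1\in\{0,1\}^n}\sum_{\mathbf s_2\in\{0,1\}^n}H\big(\mathbf s_1\mid\mathbf s_2\mid e_1-l^n_{\lambda(\mathbf s_1)}(\mathbf v)\mid e_2-l^n_{\lambda(\mathbf s_2)}(\mathbf v)\big).$$ Equivalently, $(x,y,z)\mapsto P(\lambda^{-1}(x)\mid\emptyset\mid\emptyset\mid y\mid z)$ is the adjoint of the linear map $f\mapsto \tilde f$, $\tilde f(\mathbf s_1\mid\mathbf s_2\mid d_1\mid d_2)=\sum_{\mathbf u\in\{0,1\}^n}f\big(\lambda(\mathbf u),\,l^n_{\lambda(\mathbf s_1)}(\mathbf u)+d_1,\,l^n_{\lambda(\mathbf s_2)}(\mathbf u)+d_2\big)$ (the 3D discrete John transform), acting on finitely supported $f:\{0,\dots,N-1\}\times\mathbb{Z}^2\to\mathbb{R}$.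
   Context: Bit vectors: for $\mathbf u=(u_0,\dots,u_{k-1})\in\{0,1\}^k$, $\lambda(\mathbf u)=\sum_{i=0}^{k-1}u_i2^i$ (first entry least significant), $\lambda(\emptyset)=0$; $(a,\boldsymbol\sigma)$ denotes the vector with first entry $a$ followed by the entries of $\boldsymbol\sigma$. Discrete lines: $l^0_s(\emptyset)=0$ and $l^k_s(u_0,\dots,u_{k-1})=l^{k-1}_{\lfloor s/2\rfloor}(u_0,\dots,u_{k-2})+u_{k-1}\lfloor (s+1)/2\rfloor$ for $k\ge1$, $s\ge0$. For $0\le m\le n-1$ and finitely supported $H$ on $\{0,1\}^{n-m-1}\times\{0,1\}^{m+1}\times\{0,1\}^{m+1}\times\mathbb{Z}^2$, $B_mH$ is the function on $\{0,1\}^{n-m}\times\{0,1\}^m\times\{0,1\}^m\times\mathbb{Z}^2$ given by $(B_mH)((w,\mathbf v)\mid\boldsymbol\sigma_1\mid\boldsymbol\sigma_2\mid d_1\mid d_2)=\sum_{a,b\in\{0,1\}}H(\mathbf v\mid(a,\boldsymbol\sigma_1)\mid(b,\boldsymbol\sigma_2)\mid d_1-w(a+\lambda(\boldsymbol\sigma_1))\mid d_2-w(b+\lambda(\boldsymbol\sigma_2)))$. *)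

theory Defs
  imports Complex_Main
begin

text \<open>Bit vectors are bool lists; the first entry is least significant.\<close>
fun lam :: "bool list \<Rightarrow> nat" where
  "lam [] = 0"
| "lam (a # u) = of_bool a + 2 * lam u"

text \<open>Discrete lines: dline s u = l^k_s(u) with k = length u; the recursion peels
  off the LAST entry u_(k-1).\<close>
function dline :: "nat \<Rightarrow> bool list \<Rightarrow> int" where
  "dline s u = (if u = [] then 0
     else dline (s div 2) (butlast u) + of_bool (last u) * int ((s + 1) div 2))"
  by auto
termination by (relation "measure (length \<circ> snd)") auto

declare dline.simps[simp del]

text \<open>The map B_m: a function H(v | s1 | s2 | d1 | d2) on
  {0,1}^(n-m-1) x {0,1}^(m+1) x {0,1}^(m+1) x Z^2 is sent to the function on
  {0,1}^(n-m) x {0,1}^m x {0,1}^m x Z^2 below. The index m is only the length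
  of the arguments, so the operator itself does not depend on m. Values at
  argument tuples of other shapes are irrelevant (set to 0).\<close>
definition Bop ::
  "(bool list \<Rightarrow> bool list \<Rightarrow> bool list \<Rightarrow> int \<Rightarrow> int \<Rightarrow> real)
   \<Rightarrow> (bool list \<Rightarrow> bool list \<Rightarrow> bool list \<Rightarrow> int \<Rightarrow> int \<Rightarrow> real)" where
  "Bop H wv s1 s2 d1 d2 =
     (case wv of [] \<Rightarrow> 0
      | w # v \<Rightarrow> (\<Sum>a\<in>(UNIV::bool set). \<Sum>b\<in>(UNIV::bool set).
            H v (a # s1) (b # s2)
              (d1 - of_bool w * (of_bool a + int (lam s1)))
              (d2 - of_bool w * (of_bool b + int (lam s2)))))"

end

theory Submission
  imports Defs
begin

text \<open>Induct on the number of applications of Bop, keeping the bits already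
  consumed as suffixes s1, s2 of the sample vectors. One application prepends bits a, b
  to the suffixes and shifts the offsets by w (a + \<lambda>(s)). This is exactly the
  contribution of a leading entry w of the line vector to l_{\<lambda>(t @ a # s)} with
  |t| = k: that contribution is w \<lfloor>(\<lambda>(t @ a # s) + 2^k) / 2^(k+1)\<rfloor>, and
  the quotient equals a + \<lambda>(s).\<close>

lemma lam_append: "lam (x @ y) = lam x + 2 ^ length x * lam y"
  by (induction x) auto

lemma lam_less: "lam x < 2 ^ length x"
  by (induction x) auto

lemma lam_append_Cons_div:
  assumes "length t = k"
  shows "(lam (t @ a # s) + 2 ^ k) div 2 ^ Suc k = of_bool a + lam s"
proof -
  have rem: "lam t + of_bool (\<not> a) * 2 ^ k < 2 ^ Suc k"
    using lam_less[of t] assms by auto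
  have "lam (t @ a # s) + 2 ^ k
      = (lam t + of_bool (\<not> a) * 2 ^ k) + (of_bool a + lam s) * 2 ^ Suc k"
    using lam_append[of t "a # s"] assms by (cases a) (simp_all add: algebra_simps)
  then show ?thesis
    by (simp only: div_mult_self1[OF power_not_zero] div_less[OF rem] add_0)
qed

lemma dline_Nil [simp]: "dline s [] = 0"
  by (simp add: dline.simps)

lemma dline_snoc: "dline s (u @ [x]) = dline (s div 2) u + of_bool x * int ((s + 1) div 2)"
  by (subst dline.simps) simp

lemma dline_Cons:
  "dline s (w # v) = of_bool w * int ((s + 2 ^ length v) div 2 ^ Suc (length v)) + dline s v"
proof (induction v arbitrary: s rule: rev_induct)
  case Nil
  then show ?case by (simp add: dline.simps)
next
  case (snoc x v)
  have "(s div 2 + 2 ^ length v) div 2 ^ Suc (length v)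
      = (s + 2 ^ Suc (length v)) div 2 ^ Suc (Suc (length v))"
    by (simp only: power_Suc div_mult2_eq add.commute[of "s div 2"]) simp
  then show ?case
    using snoc.IH[of "s div 2"] dline_snoc[of s "w # v" x] dline_snoc[of s v x] by simp
qed

lemma sum_lists_length_Suc_snoc:
  "(\<Sum>t\<in>{t::'a list. length t = Suc k}. g t) = (\<Sum>a\<in>UNIV. \<Sum>t\<in>{t. length t = k}. g (t @ [a]))"
proof -
  have "{t::'a list. length t = Suc k} = (\<lambda>(a, t). t @ [a]) ` (UNIV \<times> {t. length t = k})"
  proof safe
    fix t :: "'a list"
    assume "length t = Suc k"
    then show "t \<in> (\<lambda>(a, t). t @ [a]) ` (UNIV \<times> {t. length t = k})"
      by (intro image_eqI[of _ _ "(last t, butlast t)"])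
        (auto intro: append_butlast_last_id[symmetric])
  qed auto
  moreover have "inj_on (\<lambda>(a, t). t @ [a]) (UNIV \<times> {t::'a list. length t = k})"
    by (auto simp: inj_on_def)
  ultimately show ?thesis
    by (simp add: sum.reindex sum.cartesian_product prod.case_distrib)
qed

lemma Bop_step_offset:
  assumes "length t = length v"
  shows "d - of_bool w * (of_bool a + int (lam s)) - dline (lam (t @ a # s)) v
       = d - dline (lam (t @ a # s)) (w # v)"
  using lam_append_Cons_div[OF assms, of a s] by (simp add: dline_Cons)

lemma Bop_power_eq:
  "length wv = k \<Longrightarrow> (Bop ^^ k) F wv s1 s2 d1 d2 =
    (\<Sum>t1\<in>{t. length t = k}. \<Sum>t2\<in>{t. length t = k}.
        F [] (t1 @ s1) (t2 @ s2) (d1 - dline (lam (t1 @ s1)) wv) (d2 - dline (lam (t2 @ s2)) wv))"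
proof (induction k arbitrary: wv s1 s2 d1 d2)
  case 0
  then show ?case by simp
next
  case (Suc k)
  then obtain w v where wv: "wv = w # v" and lv: "length v = k" by (cases wv) auto
  have "(Bop ^^ Suc k) F wv s1 s2 d1 d2 =
     (\<Sum>a\<in>UNIV. \<Sum>b\<in>UNIV. \<Sum>t1\<in>{t. length t = k}. \<Sum>t2\<in>{t. length t = k}.
     F [] (t1 @ a # s1) (t2 @ b # s2)
       (d1 - of_bool w * (of_bool a + int (lam s1)) - dline (lam (t1 @ a # s1)) v)
       (d2 - of_bool w * (of_bool b + int (lam s2)) - dline (lam (t2 @ b # s2)) v))"
    by (simp add: wv Bop_def Suc.IH lv)
  also have "\<dots> = (\<Sum>a\<in>UNIV. \<Sum>b\<in>UNIV. \<Sum>t1\<in>{t. length t = k}. \<Sum>t2\<in>{t. length t = k}.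
     F [] (t1 @ a # s1) (t2 @ b # s2)
       (d1 - dline (lam (t1 @ a # s1)) wv) (d2 - dline (lam (t2 @ b # s2)) wv))"
    by (intro sum.cong refl) (simp add: wv lv Bop_step_offset)
  also have "\<dots> = (\<Sum>a\<in>UNIV. \<Sum>t1\<in>{t. length t = k}. \<Sum>b\<in>UNIV. \<Sum>t2\<in>{t. length t = k}.
     F [] (t1 @ a # s1) (t2 @ b # s2)
       (d1 - dline (lam (t1 @ a # s1)) wv) (d2 - dline (lam (t2 @ b # s2)) wv))"
    by (intro sum.cong refl sum.swap)
  also have "\<dots> = (\<Sum>t1\<in>{t. length t = Suc k}. \<Sum>t2\<in>{t. length t = Suc k}.
        F [] (t1 @ s1) (t2 @ s2) (d1 - dline (lam (t1 @ s1)) wv) (d2 - dline (lam (t2 @ s2)) wv))"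
    by (simp add: sum_lists_length_Suc_snoc)
  finally show ?case .
qed

theorem mainTheorem4:
  fixes n :: nat and H :: "bool list \<Rightarrow> bool list \<Rightarrow> int \<Rightarrow> int \<Rightarrow> real"
    and v :: "bool list" and e1 e2 :: int
  assumes "n \<ge> 1"
    and "finite {(s1, s2, d1, d2). length s1 = n \<and> length s2 = n \<and> H s1 s2 d1 d2 \<noteq> 0}"
    and "length v = n"
  shows "(Bop ^^ n) (\<lambda>_ s1 s2 d1 d2. H s1 s2 d1 d2) v [] [] e1 e2 =
    (\<Sum>s1\<in>{s. length s = n}. \<Sum>s2\<in>{s. length s = n}.
        H s1 s2 (e1 - dline (lam s1) v) (e2 - dline (lam s2) v))"
  using Bop_power_eq[OF assms(3), of "\<lambda>_ s1 s2 d1 d2. H s1 s2 d1 d2" "[]" "[]" e1 e2] by simp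

end
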